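(* For the game ${\rm ab}$: - $\lim_{n\to\infty}P^{\rm ab}_n(p)=0$ if $p<1/64$; - $\lim_{n\to\infty}P^{\rm ab}_n(p)=1$ if $p>15/16$.
   Context: Fix $n\geq1$. Alice and Bob alternately make moves, Alice first, each making $n$ moves; every move is a choice from $\{1,2\}$. The outcome of the game ${\rm ab}_n(p)$ is the pair $(\#\{k:a_k=1\},\#\{k:b_k=1\})$, where $a_1,\dots,a_n$ are Alice's moves and $b_1,\dots,b_n$ are Bob's moves. To each possible outcome a winner is assigned independently: Bob with probability $p$, Alice with probability $1-p$. The players know the assignment and all previous moves. $P^{\rm ab}_n(p)$ is the probability that Bob has a winning strategy, i.e. a rule choosing his moves as a function of previous moves that guarantees a win for him whatever Alice plays. *)

theory Defs
  imports Complex_Main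
begin

text \<open>Moves are naturals in {1,2}. Alice's moves are a sequence a :: nat => nat
  (a k is her (k+1)-th move, only k < n matters). Bob's strategy maps the list of
  all previous moves (a_1, b_1, ..., a_k) to his move b_k.\<close>

type_synonym bob_strategy = "nat list \<Rightarrow> nat"

fun hist :: "(nat \<Rightarrow> nat) \<Rightarrow> bob_strategy \<Rightarrow> nat \<Rightarrow> nat list" where
  "hist a \<sigma> 0 = []"
| "hist a \<sigma> (Suc k) = hist a \<sigma> k @ [a k, \<sigma> (hist a \<sigma> k @ [a k])]"

definition bob_move :: "(nat \<Rightarrow> nat) \<Rightarrow> bob_strategy \<Rightarrow> nat \<Rightarrow> nat" where
  "bob_move a \<sigma> k = \<sigma> (hist a \<sigma> k @ [a k])"

definition ab_outcome :: "nat \<Rightarrow> (nat \<Rightarrow> nat) \<Rightarrow> bob_strategy \<Rightarrow> nat \<times> nat" where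
  "ab_outcome n a \<sigma> = (card {k. k < n \<and> a k = 1}, card {k. k < n \<and> bob_move a \<sigma> k = 1})"

definition outcomes :: "nat \<Rightarrow> (nat \<times> nat) set" where
  "outcomes n = {0..n} \<times> {0..n}"

text \<open>S is the set of outcomes assigned to Bob. Bob has a winning strategy iff
  some legal strategy wins against every legal sequence of Alice's moves.\<close>
definition bob_wins :: "nat \<Rightarrow> (nat \<times> nat) set \<Rightarrow> bool" where
  "bob_wins n S \<longleftrightarrow>
     (\<exists>\<sigma>::bob_strategy. (\<forall>h. \<sigma> h \<in> {1,2}) \<and>
        (\<forall>a. (\<forall>k<n. a k \<in> {1,2}) \<longrightarrow> ab_outcome n a \<sigma> \<in> S))"

text \<open>Each outcome is independently Bob's with probability p: the probability that
  the set of Bob's outcomes equals S is p^|S| (1-p)^(|outcomes| - |S|).\<close>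
definition P_ab :: "nat \<Rightarrow> real \<Rightarrow> real" where
  "P_ab n p = (\<Sum>S\<in>Pow (outcomes n).
      (if bob_wins n S then p ^ card S * (1 - p) ^ (card (outcomes n) - card S) else 0))"

end

theory Submission
  imports Defs "HOL-Library.Discrete_Functions"
begin

text \<open>
  Bob wins \<open>ab\<^sub>n\<close> iff he wins the game on positions \<open>(x, y)\<close>, the numbers of 1s played
  so far, in which each round adds 0 or 1 to each coordinate. A subgame of \<open>k\<close> rounds starting
  at \<open>(x, y)\<close> only looks at the outcomes in the square \<open>[x, x + k] \<times> [y, y + k]\<close>.

  Let \<open>k + 1 = 2\<^sup>j\<close> and consider \<open>2k + 1\<close> rounds. If Bob wins, then whichever move Alice
  repeats during the first \<open>k + 1\<close> rounds, Bob still wins one of the \<open>k + 2\<close> subgames of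
  length \<open>k\<close> that can follow. Alice's two choices lead into disjoint columns of outcomes, so
  the two events are independent, and the probability \<open>q(k)\<close> that Bob wins a subgame of
  length \<open>k\<close> satisfies \<open>q(2k + 1) \<le> ((k + 2) q(k))\<^sup>2\<close>; from \<open>q(0) = p \<le> 1/16\<close> we get
  \<open>q(k) \<le> 1 / (16 (k + 1)\<^sup>2)\<close>. Dually, if Bob loses, Alice has a first move after which,
  for each move Bob could repeat during \<open>k + 1\<close> rounds, she wins one of \<open>k + 1\<close> subgames;
  Bob's two choices lead into disjoint rows, so the probability \<open>q'(k)\<close> that Bob loses
  satisfies \<open>q'(2k + 1) \<le> 2 ((k + 1) q'(k))\<^sup>2\<close>, whence \<open>q'(k) \<le> 1 / (8 (k + 1)\<^sup>2)\<close> when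
  \<open>1 - p \<le> 1/8\<close>.

  A game of length \<open>n\<close> is reduced, by a union bound, to at most \<open>k + 1\<close> subgames of length
  \<open>k\<close> with \<open>n + 1 \<le> 2 (k + 1)\<close>. Hence \<open>P_ab n p = O(1/n)\<close> for \<open>p \<le> 1/16\<close> and
  \<open>1 - P_ab n p = O(1/n)\<close> for \<open>p \<ge> 7/8\<close>, thresholds weaker than \<open>1/64\<close> and \<open>15/16\<close>.
\<close>

section \<open>Random subsets\<close>

definition subset_weight :: "real \<Rightarrow> 'a set \<Rightarrow> 'a set \<Rightarrow> real" where
  "subset_weight p U S = p ^ card S * (1 - p) ^ (card U - card S)"

definition subset_prob :: "real \<Rightarrow> 'a set \<Rightarrow> ('a set \<Rightarrow> bool) \<Rightarrow> real" where
  "subset_prob p U E = (\<Sum>S\<in>Pow U. of_bool (E S) * subset_weight p U S)"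

definition depends_only_on :: "'a set \<Rightarrow> ('a set \<Rightarrow> bool) \<Rightarrow> bool" where
  "depends_only_on A E \<longleftrightarrow> (\<forall>S. E S = E (S \<inter> A))"

lemma subset_weight_nonneg: "0 \<le> p \<Longrightarrow> p \<le> 1 \<Longrightarrow> 0 \<le> subset_weight p U S"
  unfolding subset_weight_def by simp

lemma subset_weight_Un:
  assumes "finite U" "A \<subseteq> U" "T \<subseteq> A" "V \<subseteq> U - A"
  shows "subset_weight p U (T \<union> V) = subset_weight p A T * subset_weight p (U - A) V"
proof -
  have "finite A" "finite T" "finite V"
    using assms finite_subset by (metis Diff_subset)+
  have card_Un: "card (T \<union> V) = card T + card V"
    using assms \<open>finite T\<close> \<open>finite V\<close> by (intro card_Un_disjoint) auto
  have "card V \<le> card (U - A)" "card T \<le> card A"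
    using assms \<open>finite A\<close> by (auto intro!: card_mono)
  moreover have "card A + card (U - A) = card U"
    using assms \<open>finite A\<close> by (simp add: card_Diff_subset card_mono)
  ultimately
  have "card U - card (T \<union> V) = (card A - card T) + (card (U - A) - card V)"
    unfolding card_Un by linarith
  then show ?thesis
    unfolding subset_weight_def card_Un by (simp add: power_add)
qed

lemma subset_prob_cong:
  "(\<And>S. S \<subseteq> U \<Longrightarrow> E S = F S) \<Longrightarrow> subset_prob p U E = subset_prob p U F"
  unfolding subset_prob_def by (rule sum.cong) auto

lemma sum_Pow_split:
  assumes "finite U" "A \<subseteq> U"
  shows "(\<Sum>S\<in>Pow U. f (S \<inter> A) * g (S - A) * subset_weight p U S)
       = (\<Sum>T\<in>Pow A. f T * subset_weight p A T) * (\<Sum>V\<in>Pow (U - A). g V * subset_weight p (U - A) V)"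
proof -
  have "bij_betw (\<lambda>(T, V). T \<union> V) (Pow A \<times> Pow (U - A)) (Pow U)"
    by (rule bij_betw_byWitness[where f' = "\<lambda>S. (S \<inter> A, S - A)"]) (use assms in auto)
  then have "(\<Sum>S\<in>Pow U. f (S \<inter> A) * g (S - A) * subset_weight p U S)
      = (\<Sum>(T, V)\<in>Pow A \<times> Pow (U - A). f ((T \<union> V) \<inter> A) * g (T \<union> V - A) * subset_weight p U (T \<union> V))"
    by (simp add: sum.reindex_bij_betw[symmetric] case_prod_unfold)
  also have "\<dots> = (\<Sum>(T, V)\<in>Pow A \<times> Pow (U - A). f T * subset_weight p A T * (g V * subset_weight p (U - A) V))"
  proof (safe intro!: sum.cong)
    fix T V assume "T \<subseteq> A" "V \<subseteq> U - A"
    then have "(T \<union> V) \<inter> A = T" "T \<union> V - A = V" by auto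
    with \<open>T \<subseteq> A\<close> \<open>V \<subseteq> U - A\<close> show "f ((T \<union> V) \<inter> A) * g (T \<union> V - A) * subset_weight p U (T \<union> V)
        = f T * subset_weight p A T * (g V * subset_weight p (U - A) V)"
      by (simp add: subset_weight_Un[OF assms])
  qed
  also have "\<dots> = (\<Sum>T\<in>Pow A. f T * subset_weight p A T) * (\<Sum>V\<in>Pow (U - A). g V * subset_weight p (U - A) V)"
    by (simp add: sum_product sum.cartesian_product)
  finally show ?thesis .
qed

lemma subset_prob_split:
  assumes "finite U" "A \<subseteq> U"
  shows "subset_prob p U (\<lambda>S. E (S \<inter> A) \<and> F (S - A)) = subset_prob p A E * subset_prob p (U - A) F"
  using sum_Pow_split[OF assms, of "\<lambda>T. of_bool (E T)" "\<lambda>V. of_bool (F V)" p]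
  by (simp add: subset_prob_def of_bool_conj)

lemma subset_prob_True: "finite U \<Longrightarrow> subset_prob p U (\<lambda>_. True) = 1"
proof (induction U rule: finite_induct)
  case empty
  then show ?case by (simp add: subset_prob_def subset_weight_def)
next
  case (insert c V)
  have "subset_prob p (insert c V) (\<lambda>_. True)
      = subset_prob p {c} (\<lambda>_. True) * subset_prob p (insert c V - {c}) (\<lambda>_. True)"
    using subset_prob_split[of "insert c V" "{c}" p "\<lambda>_. True" "\<lambda>_. True"] insert by simp
  also have "insert c V - {c} = V" using insert by auto
  finally show ?case
    using insert by (simp add: subset_prob_def subset_weight_def Pow_insert)
qed

lemma subset_prob_nonneg: "0 \<le> p \<Longrightarrow> p \<le> 1 \<Longrightarrow> 0 \<le> subset_prob p U E"
  unfolding subset_prob_def by (intro sum_nonneg) (simp add: subset_weight_nonneg)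

lemma subset_prob_mono:
  assumes "0 \<le> p" "p \<le> 1" "\<And>S. S \<subseteq> U \<Longrightarrow> E S \<Longrightarrow> F S"
  shows "subset_prob p U E \<le> subset_prob p U F"
  unfolding subset_prob_def
  by (intro sum_mono mult_right_mono) (use assms subset_weight_nonneg in auto)

lemma subset_prob_Not:
  assumes "finite U"
  shows "subset_prob p U (\<lambda>S. \<not> E S) = 1 - subset_prob p U E"
proof -
  have "subset_prob p U (\<lambda>S. \<not> E S) + subset_prob p U E = subset_prob p U (\<lambda>_. True)"
    unfolding subset_prob_def by (simp add: sum.distrib[symmetric] distrib_right[symmetric] of_bool_not_iff)
  then show ?thesis
    using subset_prob_True[OF assms] by simp
qed

lemma subset_prob_le_1: "finite U \<Longrightarrow> 0 \<le> p \<Longrightarrow> p \<le> 1 \<Longrightarrow> subset_prob p U E \<le> 1"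
  using subset_prob_Not[of U p E] subset_prob_nonneg[of p U "\<lambda>S. \<not> E S"] by simp

lemma subset_prob_member:
  assumes "finite U" "c \<in> U"
  shows "subset_prob p U (\<lambda>S. c \<in> S) = p"
proof -
  have "subset_prob p U (\<lambda>S. c \<in> S) = subset_prob p U (\<lambda>S. c \<in> S \<inter> {c} \<and> True)"
    by simp
  also have "\<dots> = subset_prob p {c} (\<lambda>T. c \<in> T) * subset_prob p (U - {c}) (\<lambda>_. True)"
    using assms by (intro subset_prob_split) auto
  also have "subset_prob p {c} (\<lambda>T. c \<in> T) = p"
    by (simp add: subset_prob_def subset_weight_def Pow_insert)
  finally show ?thesis
    using assms by (simp add: subset_prob_True)
qed

lemma subset_prob_Bex_le:
  fixes b :: real
  assumes "0 \<le> p" "p \<le> 1" "finite I" "\<And>i. i \<in> I \<Longrightarrow> subset_prob p U (E i) \<le> b"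
  shows "subset_prob p U (\<lambda>S. \<exists>i\<in>I. E i S) \<le> card I * b"
proof -
  have "of_bool (\<exists>i\<in>I. E i S) \<le> (\<Sum>i\<in>I. of_bool (E i S) :: real)" for S
  proof (cases "\<exists>i\<in>I. E i S")
    case True
    then obtain i where "i \<in> I" "E i S" by blast
    then have "of_bool (E i S) \<le> (\<Sum>i\<in>I. of_bool (E i S) :: real)"
      using assms(3) by (intro member_le_sum) auto
    with \<open>E i S\<close> show ?thesis by simp
  qed (simp add: sum_nonneg)
  then have "subset_prob p U (\<lambda>S. \<exists>i\<in>I. E i S) \<le> (\<Sum>S\<in>Pow U. \<Sum>i\<in>I. of_bool (E i S) * subset_weight p U S)"
    unfolding subset_prob_def sum_distrib_right[symmetric]
    by (intro sum_mono mult_right_mono) (simp_all add: assms subset_weight_nonneg)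
  also have "\<dots> = (\<Sum>i\<in>I. subset_prob p U (E i))"
    unfolding subset_prob_def by (rule sum.swap)
  also have "\<dots> \<le> card I * b"
    using sum_mono[of I "\<lambda>i. subset_prob p U (E i)" "\<lambda>_. b"] assms(4) by simp
  finally show ?thesis .
qed

lemma subset_prob_conj_independent:
  assumes "finite U" "depends_only_on A E" "depends_only_on B F" "A \<inter> B = {}"
  shows "subset_prob p U (\<lambda>S. E S \<and> F S) = subset_prob p U E * subset_prob p U F"
proof -
  define A' where "A' = A \<inter> U"
  have A': "A' \<subseteq> U" unfolding A'_def by auto
  have E: "E S = E (S \<inter> A')" and F: "F S = F (S - A')" if "S \<subseteq> U" for S
  proof -
    have "S \<inter> A' = S \<inter> A" "(S - A') \<inter> B = S \<inter> B"
      using that assms(4) unfolding A'_def by auto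
    then show "E S = E (S \<inter> A')" "F S = F (S - A')"
      using assms(2,3) unfolding depends_only_on_def by metis+
  qed
  have "subset_prob p U (\<lambda>S. E S \<and> F S) = subset_prob p U (\<lambda>S. E (S \<inter> A') \<and> F (S - A'))"
    and "subset_prob p U E = subset_prob p U (\<lambda>S. E (S \<inter> A') \<and> True)"
    and "subset_prob p U F = subset_prob p U (\<lambda>S. True \<and> F (S - A'))"
    using E F by (auto intro!: subset_prob_cong)
  moreover have "subset_prob p A' (\<lambda>_. True) = 1" "subset_prob p (U - A') (\<lambda>_. True) = 1"
    using assms(1) A' by (auto intro: subset_prob_True finite_subset)
  ultimately show ?thesis
    using subset_prob_split[OF assms(1) A', of p E F] subset_prob_split[OF assms(1) A', of p E "\<lambda>_. True"]
      subset_prob_split[OF assms(1) A', of p "\<lambda>_. True" F]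
    by simp
qed

section \<open>The game as a recursion on positions\<close>

text \<open>\<open>bob_wins_from k x y S\<close>: Bob wins when \<open>k\<close> rounds remain and Alice and Bob have so far
  played \<open>x\<close> and \<open>y\<close> ones; a move \<open>True\<close> stands for playing 1.\<close>

fun bob_wins_from :: "nat \<Rightarrow> nat \<Rightarrow> nat \<Rightarrow> (nat \<times> nat) set \<Rightarrow> bool" where
  "bob_wins_from 0 x y S \<longleftrightarrow> (x, y) \<in> S"
| "bob_wins_from (Suc k) x y S \<longleftrightarrow> (\<forall>\<alpha>. \<exists>\<beta>. bob_wins_from k (x + of_bool \<alpha>) (y + of_bool \<beta>) S)"

definition ones :: "(nat \<Rightarrow> nat) \<Rightarrow> nat \<Rightarrow> nat" where
  "ones f k = card {i. i < k \<and> f i = 1}"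

lemma ones_0 [simp]: "ones f 0 = 0"
  by (simp add: ones_def)

lemma ones_Suc [simp]: "ones f (Suc k) = ones f k + of_bool (f k = 1)"
proof -
  have "{i. i < Suc k \<and> f i = 1} = {i. i < k \<and> f i = 1} \<union> (if f k = 1 then {k} else {})"
    by (auto simp: less_Suc_eq)
  then show ?thesis
    by (simp add: ones_def)
qed

lemma ab_outcome_eq_ones: "ab_outcome n a \<sigma> = (ones a n, ones (bob_move a \<sigma>) n)"
  by (simp add: ab_outcome_def ones_def)

fun alice_ones :: "nat list \<Rightarrow> nat" where
  "alice_ones [] = 0"
| "alice_ones [u] = of_bool (u = 1)"
| "alice_ones (u # v # h) = of_bool (u = 1) + alice_ones h"

fun bob_ones :: "nat list \<Rightarrow> nat" where
  "bob_ones [] = 0"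
| "bob_ones [u] = 0"
| "bob_ones (u # v # h) = of_bool (v = 1) + bob_ones h"

lemma alice_ones_append: "even (length h) \<Longrightarrow> alice_ones (h @ h') = alice_ones h + alice_ones h'"
  by (induction h rule: alice_ones.induct) auto

lemma bob_ones_append: "even (length h) \<Longrightarrow> bob_ones (h @ h') = bob_ones h + bob_ones h'"
  by (induction h rule: bob_ones.induct) auto

lemma length_hist [simp]: "length (hist a \<sigma> k) = 2 * k"
  by (induction k) auto

lemma alice_ones_hist [simp]: "alice_ones (hist a \<sigma> k) = ones a k"
  by (induction k) (simp_all add: alice_ones_append)

lemma bob_ones_hist [simp]: "bob_ones (hist a \<sigma> k) = ones (bob_move a \<sigma>) k"
  by (induction k) (simp_all add: bob_ones_append bob_move_def)

lemma alice_ones_hist_snoc [simp]: "alice_ones (hist a \<sigma> k @ [u]) = ones a k + of_bool (u = 1)"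
  by (simp add: alice_ones_append)

lemma bob_ones_hist_snoc [simp]: "bob_ones (hist a \<sigma> k @ [u]) = ones (bob_move a \<sigma>) k"
  by (simp add: bob_ones_append)

definition winning_bob_strategy :: "nat \<Rightarrow> (nat \<times> nat) set \<Rightarrow> bob_strategy" where
  "winning_bob_strategy n S h =
     (if bob_wins_from (n - Suc (length h div 2)) (alice_ones h) (bob_ones h) S then 2 else 1)"

lemma bob_wins_if_bob_wins_from:
  assumes "bob_wins_from n 0 0 S"
  shows "bob_wins n S"
  unfolding bob_wins_def
proof (intro exI conjI allI impI)
  let ?\<sigma> = "winning_bob_strategy n S"
  show "?\<sigma> h \<in> {1, 2}" for h
    by (simp add: winning_bob_strategy_def)
  fix a :: "nat \<Rightarrow> nat"
  have "bob_wins_from (n - k) (ones a k) (ones (bob_move a ?\<sigma>) k) S" if "k \<le> n" for k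
    using that
  proof (induction k)
    case 0
    then show ?case using assms by simp
  next
    case (Suc k)
    then have "bob_wins_from (Suc (n - Suc k)) (ones a k) (ones (bob_move a ?\<sigma>) k) S"
      by (simp add: Suc_diff_Suc)
    then obtain \<beta> where \<beta>: "bob_wins_from (n - Suc k) (ones a (Suc k)) (ones (bob_move a ?\<sigma>) k + of_bool \<beta>) S"
      by auto
    have move: "bob_move a ?\<sigma> k =
        (if bob_wins_from (n - Suc k) (ones a (Suc k)) (ones (bob_move a ?\<sigma>) k) S then 2 else 1)"
      by (simp only: bob_move_def[of a _ k]) (simp add: winning_bob_strategy_def)
    show ?case
    proof (cases "bob_wins_from (n - Suc k) (ones a (Suc k)) (ones (bob_move a ?\<sigma>) k) S")
      case True
      then show ?thesis by (simp add: move)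
    next
      case False
      with \<beta> have \<beta> by (cases \<beta>) auto
      with False \<beta> show ?thesis by (simp add: move)
    qed
  qed
  from this[of n] show "ab_outcome n a ?\<sigma> \<in> S"
    by (simp add: ab_outcome_eq_ones)
qed

fun play_hist :: "(nat list \<Rightarrow> nat) \<Rightarrow> bob_strategy \<Rightarrow> nat \<Rightarrow> nat list" where
  "play_hist \<tau> \<sigma> 0 = []"
| "play_hist \<tau> \<sigma> (Suc k) =
     play_hist \<tau> \<sigma> k @ [\<tau> (play_hist \<tau> \<sigma> k), \<sigma> (play_hist \<tau> \<sigma> k @ [\<tau> (play_hist \<tau> \<sigma> k)])]"

lemma hist_play_hist: "hist (\<lambda>k. \<tau> (play_hist \<tau> \<sigma> k)) \<sigma> k = play_hist \<tau> \<sigma> k"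
  by (induction k) auto

definition refuting_alice_strategy :: "nat \<Rightarrow> (nat \<times> nat) set \<Rightarrow> nat list \<Rightarrow> nat" where
  "refuting_alice_strategy n S h =
     (if \<forall>\<beta>. \<not> bob_wins_from (n - Suc (length h div 2)) (alice_ones h) (bob_ones h + of_bool \<beta>) S
      then 2 else 1)"

lemma bob_wins_from_if_bob_wins:
  assumes "bob_wins n S"
  shows "bob_wins_from n 0 0 S"
proof (rule ccontr)
  assume lose: "\<not> bob_wins_from n 0 0 S"
  obtain \<sigma> where win: "\<And>a. (\<forall>k<n. a k \<in> {1, 2}) \<Longrightarrow> ab_outcome n a \<sigma> \<in> S"
    using assms unfolding bob_wins_def by blast
  define \<tau> where "\<tau> = refuting_alice_strategy n S"
  define a where "a k = \<tau> (play_hist \<tau> \<sigma> k)" for k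
  have "hist a \<sigma> k = play_hist \<tau> \<sigma> k" for k
    unfolding a_def by (rule hist_play_hist)
  then have "a k = \<tau> (hist a \<sigma> k)" for k
    by (simp add: a_def)
  then have move: "a k = (if \<forall>\<beta>. \<not> bob_wins_from (n - Suc k) (ones a k) (ones (bob_move a \<sigma>) k + of_bool \<beta>) S
      then 2 else 1)" for k
    by (simp add: \<tau>_def refuting_alice_strategy_def)
  have "\<not> bob_wins_from (n - k) (ones a k) (ones (bob_move a \<sigma>) k) S" if "k \<le> n" for k
    using that
  proof (induction k)
    case 0
    then show ?case using lose by simp
  next
    case (Suc k)
    then have "\<not> bob_wins_from (Suc (n - Suc k)) (ones a k) (ones (bob_move a \<sigma>) k) S"
      by (simp add: Suc_diff_Suc)
    then obtain \<alpha> where \<alpha>: "\<forall>\<beta>. \<not> bob_wins_from (n - Suc k) (ones a k + of_bool \<alpha>) (ones (bob_move a \<sigma>) k + of_bool \<beta>) S"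
      by auto
    show ?case
    proof (cases "\<forall>\<beta>. \<not> bob_wins_from (n - Suc k) (ones a k) (ones (bob_move a \<sigma>) k + of_bool \<beta>) S")
      case True
      then show ?thesis by (simp add: move[of k])
    next
      case False
      with \<alpha> have \<alpha> by (cases \<alpha>) auto
      with False \<alpha> show ?thesis by (simp add: move[of k])
    qed
  qed
  from this[of n] have "(ones a n, ones (bob_move a \<sigma>) n) \<notin> S"
    by simp
  moreover have "ab_outcome n a \<sigma> \<in> S"
    by (rule win) (simp add: move)
  ultimately show False
    by (simp add: ab_outcome_eq_ones)
qed

lemma bob_wins_iff_bob_wins_from: "bob_wins n S \<longleftrightarrow> bob_wins_from n 0 0 S"
  using bob_wins_from_if_bob_wins bob_wins_if_bob_wins_from by blast

lemma bob_wins_from_constant_block: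
  "(\<forall>d\<le>m. bob_wins_from k (x + d) (y + of_bool \<beta> * m) S) \<Longrightarrow> bob_wins_from (m + k) x y S"
proof (induction m arbitrary: x y)
  case (Suc m)
  have "bob_wins_from (m + k) (x + of_bool \<alpha>) (y + of_bool \<beta>) S" for \<alpha>
  proof (rule Suc.IH, intro allI impI)
    fix d assume "d \<le> m"
    then have "of_bool \<alpha> + d \<le> Suc m" by (cases \<alpha>) auto
    then have "bob_wins_from k (x + (of_bool \<alpha> + d)) (y + of_bool \<beta> * Suc m) S"
      using Suc.prems by blast
    then show "bob_wins_from k (x + of_bool \<alpha> + d) (y + of_bool \<beta> + of_bool \<beta> * m) S"
      by (simp add: add.assoc)
  qed
  then show ?case
    by (simp only: add_Suc bob_wins_from.simps) blast
qed simp

lemma bob_wins_from_against_constant_block: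
  "bob_wins_from (m + k) x y S \<Longrightarrow> \<exists>e\<le>m. bob_wins_from k (x + of_bool \<alpha> * m) (y + e) S"
proof (induction m arbitrary: x y)
  case (Suc m)
  then obtain \<beta> where "bob_wins_from (m + k) (x + of_bool \<alpha>) (y + of_bool \<beta>) S"
    by (simp only: add_Suc bob_wins_from.simps) blast
  with Suc.IH obtain e where "e \<le> m" "bob_wins_from k (x + of_bool \<alpha> + of_bool \<alpha> * m) (y + of_bool \<beta> + e) S"
    by blast
  moreover have "of_bool \<beta> + e \<le> Suc m"
    using \<open>e \<le> m\<close> by (cases \<beta>) auto
  ultimately show ?case
    by (metis add.assoc mult_Suc_right)
qed simp

lemma not_bob_wins_from_double:
  assumes "\<not> bob_wins_from (Suc k + k) x y S"
  shows "\<exists>\<alpha>. \<forall>\<beta>. \<exists>d\<le>k. \<not> bob_wins_from k (x + of_bool \<alpha> + d) (y + of_bool \<beta> * Suc k) S"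
proof (rule ccontr)
  assume "\<nexists>\<alpha>. \<forall>\<beta>. \<exists>d\<le>k. \<not> bob_wins_from k (x + of_bool \<alpha> + d) (y + of_bool \<beta> * Suc k) S"
  then have "\<forall>\<alpha>. \<exists>\<beta>. \<forall>d\<le>k. bob_wins_from k (x + of_bool \<alpha> + d) (y + of_bool \<beta> + of_bool \<beta> * k) S"
    by (simp add: add.assoc)
  then have "\<forall>\<alpha>. \<exists>\<beta>. bob_wins_from (k + k) (x + of_bool \<alpha>) (y + of_bool \<beta>) S"
    using bob_wins_from_constant_block by blast
  then have "bob_wins_from (Suc k + k) x y S"
    unfolding add_Suc bob_wins_from.simps .
  with assms show False by contradiction
qed

definition square :: "nat \<Rightarrow> nat \<Rightarrow> nat \<Rightarrow> (nat \<times> nat) set" where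
  "square x y k = {x..x + k} \<times> {y..y + k}"

lemma depends_only_on_bob_wins_from:
  "square x y k \<subseteq> A \<Longrightarrow> depends_only_on A (bob_wins_from k x y)"
proof (induction k arbitrary: x y)
  case 0
  then show ?case by (auto simp: depends_only_on_def square_def)
next
  case (Suc k)
  have "depends_only_on A (bob_wins_from k (x + of_bool \<alpha>) (y + of_bool \<beta>))" for \<alpha> \<beta>
    by (rule Suc.IH) (use Suc.prems in \<open>auto simp: square_def\<close>)
  then have "bob_wins_from k (x + of_bool \<alpha>) (y + of_bool \<beta>) (S \<inter> A) = bob_wins_from k (x + of_bool \<alpha>) (y + of_bool \<beta>) S"
    for \<alpha> \<beta> S
    unfolding depends_only_on_def by metis
  then show ?case
    unfolding depends_only_on_def bob_wins_from.simps by presburger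
qed

lemma depends_only_on_Bex:
  "(\<And>i. i \<in> I \<Longrightarrow> depends_only_on A (E i)) \<Longrightarrow> depends_only_on A (\<lambda>S. \<exists>i\<in>I. E i S)"
  unfolding depends_only_on_def by blast

lemma depends_only_on_Not: "depends_only_on A E \<Longrightarrow> depends_only_on A (\<lambda>S. \<not> E S)"
  unfolding depends_only_on_def by blast

section \<open>Probability bounds\<close>

lemma subset_prob_bob_wins_from_le:
  assumes "0 \<le> p" "p \<le> 1/16" "finite U"
    and "square x y k \<subseteq> U" "Suc k = 2 ^ j"
  shows "subset_prob p U (bob_wins_from k x y) \<le> 1 / (16 * real (Suc k) ^ 2)"
  using assms(4,5)
proof (induction j arbitrary: k x y)
  case 0
  then have "k = 0" "(x, y) \<in> U"
    by (auto simp: square_def)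
  with assms(2,3) show ?case
    by (simp add: subset_prob_member)
next
  case (Suc j)
  define h where "h = 2 ^ j - (1::nat)"
  have h: "Suc h = 2 ^ j" "k = Suc h + h"
    using Suc.prems(2) by (simp_all add: h_def)
  have h_real: "real (Suc k) = 2 * real (Suc h)"
    using h(2) by simp
  define F where "F \<alpha> S \<longleftrightarrow> (\<exists>e\<in>{..Suc h}. bob_wins_from h (x + of_bool \<alpha> * Suc h) (y + e) S)" for \<alpha> S
  define strip where "strip \<alpha> = {x + of_bool \<alpha> * Suc h .. x + of_bool \<alpha> * Suc h + h} \<times> (UNIV :: nat set)" for \<alpha>
  have F_le: "subset_prob p U (F \<alpha>) \<le> 1 / (8 * real (Suc h))" for \<alpha>
  proof -
    have "subset_prob p U (F \<alpha>) \<le> card {..Suc h} * (1 / (16 * real (Suc h) ^ 2))"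
      unfolding F_def
    proof (rule subset_prob_Bex_le)
      fix e assume "e \<in> {..Suc h}"
      then have "square (x + of_bool \<alpha> * Suc h) (y + e) h \<subseteq> U"
        using Suc.prems(1) h(2) by (auto simp: square_def)
      then show "subset_prob p U (bob_wins_from h (x + of_bool \<alpha> * Suc h) (y + e)) \<le> 1 / (16 * real (Suc h) ^ 2)"
        using Suc.IH h(1) by blast
    qed (use assms in auto)
    also have "\<dots> \<le> 2 * real (Suc h) * (1 / (16 * real (Suc h) ^ 2))"
      by (intro mult_right_mono) auto
    also have "\<dots> = 1 / (8 * real (Suc h))"
      by (simp add: field_simps power2_eq_square del: of_nat_Suc)
    finally show ?thesis .
  qed
  have F_if_win: "F \<alpha> S" if "bob_wins_from k x y S" for \<alpha> S
    using bob_wins_from_against_constant_block[OF that[unfolded h(2)], of \<alpha>]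
    unfolding F_def by auto
  have F_depends: "depends_only_on (strip \<alpha>) (F \<alpha>)" for \<alpha>
    unfolding F_def[abs_def]
    by (intro depends_only_on_Bex depends_only_on_bob_wins_from) (auto simp: square_def strip_def)
  have "subset_prob p U (bob_wins_from k x y) \<le> subset_prob p U (\<lambda>S. F False S \<and> F True S)"
    using assms(1,2) F_if_win by (intro subset_prob_mono) auto
  also have "\<dots> = subset_prob p U (F False) * subset_prob p U (F True)"
    by (rule subset_prob_conj_independent[OF assms(3) F_depends F_depends]) (auto simp: strip_def)
  also have "\<dots> \<le> 1 / (8 * real (Suc h)) * (1 / (8 * real (Suc h)))"
    using assms(1,2) by (intro mult_mono F_le subset_prob_nonneg) auto
  also have "\<dots> = 1 / (16 * real (Suc k) ^ 2)"
    by (simp add: h_real power2_eq_square field_simps del: of_nat_Suc)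
  finally show ?case .
qed

lemma subset_prob_not_bob_wins_from_le:
  assumes "7/8 \<le> p" "p \<le> 1" "finite U"
    and "square x y k \<subseteq> U" "Suc k = 2 ^ j"
  shows "subset_prob p U (\<lambda>S. \<not> bob_wins_from k x y S) \<le> 1 / (8 * real (Suc k) ^ 2)"
  using assms(4,5)
proof (induction j arbitrary: k x y)
  case 0
  then have "k = 0" "(x, y) \<in> U"
    by (auto simp: square_def)
  with assms(1,3) show ?case
    by (simp add: subset_prob_Not subset_prob_member)
next
  case (Suc j)
  define h where "h = 2 ^ j - (1::nat)"
  have h: "Suc h = 2 ^ j" "k = Suc h + h"
    using Suc.prems(2) by (simp_all add: h_def)
  have h_real: "real (Suc k) = 2 * real (Suc h)"
    using h(2) by simp
  define E where "E \<alpha> \<beta> S \<longleftrightarrow> (\<exists>d\<in>{..h}. \<not> bob_wins_from h (x + of_bool \<alpha> + d) (y + of_bool \<beta> * Suc h) S)"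
    for \<alpha> \<beta> S
  define strip where "strip \<beta> = (UNIV :: nat set) \<times> {y + of_bool \<beta> * Suc h .. y + of_bool \<beta> * Suc h + h}" for \<beta>
  have E_le: "subset_prob p U (E \<alpha> \<beta>) \<le> 1 / (8 * real (Suc h))" for \<alpha> \<beta>
  proof -
    have "subset_prob p U (E \<alpha> \<beta>) \<le> card {..h} * (1 / (8 * real (Suc h) ^ 2))"
      unfolding E_def
    proof (rule subset_prob_Bex_le)
      fix d assume "d \<in> {..h}"
      then have "square (x + of_bool \<alpha> + d) (y + of_bool \<beta> * Suc h) h \<subseteq> U"
        using Suc.prems(1) h(2) by (auto simp: square_def)
      then show "subset_prob p U (\<lambda>S. \<not> bob_wins_from h (x + of_bool \<alpha> + d) (y + of_bool \<beta> * Suc h) S)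
          \<le> 1 / (8 * real (Suc h) ^ 2)"
        using Suc.IH h(1) by blast
    qed (use assms in auto)
    also have "\<dots> = 1 / (8 * real (Suc h))"
      by (simp add: field_simps power2_eq_square del: of_nat_Suc)
    finally show ?thesis .
  qed
  have E_if_lose: "\<exists>\<alpha>\<in>UNIV. E \<alpha> False S \<and> E \<alpha> True S" if "\<not> bob_wins_from k x y S" for S
    using not_bob_wins_from_double[OF that[unfolded h(2)]] unfolding E_def atMost_iff Bex_def by blast
  have E_depends: "depends_only_on (strip \<beta>) (E \<alpha> \<beta>)" for \<alpha> \<beta>
    unfolding E_def[abs_def]
    by (intro depends_only_on_Bex depends_only_on_Not depends_only_on_bob_wins_from)
      (auto simp: square_def strip_def)
  have "subset_prob p U (\<lambda>S. \<not> bob_wins_from k x y S)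
      \<le> subset_prob p U (\<lambda>S. \<exists>\<alpha>\<in>UNIV. E \<alpha> False S \<and> E \<alpha> True S)"
    using assms(1,2) E_if_lose by (intro subset_prob_mono) auto
  also have "\<dots> \<le> card (UNIV :: bool set) * (1 / (8 * real (Suc h)) * (1 / (8 * real (Suc h))))"
  proof (rule subset_prob_Bex_le)
    fix \<alpha> :: bool
    have "subset_prob p U (\<lambda>S. E \<alpha> False S \<and> E \<alpha> True S) = subset_prob p U (E \<alpha> False) * subset_prob p U (E \<alpha> True)"
      by (rule subset_prob_conj_independent[OF assms(3) E_depends E_depends]) (auto simp: strip_def)
    also have "\<dots> \<le> 1 / (8 * real (Suc h)) * (1 / (8 * real (Suc h)))"
      using assms(1,2) by (intro mult_mono E_le subset_prob_nonneg) auto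
    finally show "subset_prob p U (\<lambda>S. E \<alpha> False S \<and> E \<alpha> True S) \<le> \<dots>" .
  qed (use assms in auto)
  also have "\<dots> = 1 / (8 * real (Suc k) ^ 2)"
    by (simp add: h_real power2_eq_square field_simps del: of_nat_Suc)
  finally show ?case .
qed

lemma split_at_power_of_two:
  obtains k j where "Suc k = 2 ^ j" "k \<le> n" "n - k \<le> k" "Suc n \<le> 2 * Suc k"
proof
  define j where "j = floor_log (Suc n)"
  have "2 ^ j \<le> Suc n" "Suc n < 2 * 2 ^ j"
    unfolding j_def by (simp_all add: floor_log_exp2_le floor_log_exp2_gt)
  then show "Suc (2 ^ j - 1) = 2 ^ j" "2 ^ j - 1 \<le> n" "n - (2 ^ j - 1) \<le> 2 ^ j - 1"
      "Suc n \<le> 2 * Suc (2 ^ j - 1)"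
    by simp_all
qed

lemma card_mult_square_bound_le:
  fixes c :: real
  assumes "0 < c" "r \<le> m" "Suc n \<le> 2 * m"
  shows "real r * (1 / (c * real m ^ 2)) \<le> 1 / (c * real (Suc n)) * 2"
proof -
  have "0 < m" using assms(3) by simp
  have "real r * (1 / (c * real m ^ 2)) \<le> real m * (1 / (c * real m ^ 2))"
    using assms(1,2) by (intro mult_right_mono) auto
  also have "\<dots> = 2 / (c * (2 * real m))"
    using \<open>0 < m\<close> by (simp add: power2_eq_square)
  also have "\<dots> \<le> 2 / (c * real (Suc n))"
    using assms \<open>0 < m\<close> by (intro divide_left_mono mult_left_mono) (auto simp del: of_nat_Suc)
  finally show ?thesis by simp
qed

lemma finite_outcomes: "finite (outcomes n)"
  by (simp add: outcomes_def)

lemma P_ab_eq_subset_prob: "P_ab n p = subset_prob p (outcomes n) (bob_wins_from n 0 0)"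
  unfolding P_ab_def subset_prob_def subset_weight_def bob_wins_iff_bob_wins_from
  by (intro sum.cong) auto

lemma P_ab_le:
  assumes "0 \<le> p" "p \<le> 1/16"
  shows "P_ab n p \<le> 1 / (8 * real (Suc n))"
proof -
  obtain k j where k: "Suc k = 2 ^ j" "k \<le> n" "n - k \<le> k" "Suc n \<le> 2 * Suc k"
    by (rule split_at_power_of_two)
  define r where "r = n - k"
  have "bob_wins_from n 0 0 S \<Longrightarrow> \<exists>e\<in>{..r}. bob_wins_from k 0 e S" for S
    using bob_wins_from_against_constant_block[of r k 0 0 S False] k(2)
    unfolding r_def Bex_def atMost_iff by simp
  then have "P_ab n p \<le> subset_prob p (outcomes n) (\<lambda>S. \<exists>e\<in>{..r}. bob_wins_from k 0 e S)"
    unfolding P_ab_eq_subset_prob using assms by (intro subset_prob_mono) auto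
  also have "\<dots> \<le> card {..r} * (1 / (16 * real (Suc k) ^ 2))"
  proof (rule subset_prob_Bex_le)
    fix e assume "e \<in> {..r}"
    then have "square 0 e k \<subseteq> outcomes n"
      using k(2) by (auto simp: square_def outcomes_def r_def)
    then show "subset_prob p (outcomes n) (bob_wins_from k 0 e) \<le> 1 / (16 * real (Suc k) ^ 2)"
      using assms k(1) by (intro subset_prob_bob_wins_from_le) (auto simp: outcomes_def)
  qed (use assms in auto)
  also have "\<dots> \<le> 1 / (16 * real (Suc n)) * 2"
    using k(3,4) by (intro card_mult_square_bound_le) (auto simp: r_def)
  finally show ?thesis
    by (simp add: field_simps)
qed

lemma one_minus_P_ab_le:
  assumes "7/8 \<le> p" "p \<le> 1"
  shows "1 - P_ab n p \<le> 1 / (4 * real (Suc n))"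
proof -
  obtain k j where k: "Suc k = 2 ^ j" "k \<le> n" "n - k \<le> k" "Suc n \<le> 2 * Suc k"
    by (rule split_at_power_of_two)
  define r where "r = n - k"
  have "\<not> bob_wins_from n 0 0 S \<Longrightarrow> \<exists>d\<in>{..r}. \<not> bob_wins_from k d 0 S" for S
    using bob_wins_from_constant_block[of r k 0 0 False S] k(2)
    unfolding r_def Bex_def atMost_iff by auto
  then have "1 - P_ab n p \<le> subset_prob p (outcomes n) (\<lambda>S. \<exists>d\<in>{..r}. \<not> bob_wins_from k d 0 S)"
    unfolding P_ab_eq_subset_prob subset_prob_Not[OF finite_outcomes, symmetric]
    using assms by (intro subset_prob_mono) auto
  also have "\<dots> \<le> card {..r} * (1 / (8 * real (Suc k) ^ 2))"
  proof (rule subset_prob_Bex_le)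
    fix d assume "d \<in> {..r}"
    then have "square d 0 k \<subseteq> outcomes n"
      using k(2) by (auto simp: square_def outcomes_def r_def)
    then show "subset_prob p (outcomes n) (\<lambda>S. \<not> bob_wins_from k d 0 S) \<le> 1 / (8 * real (Suc k) ^ 2)"
      using assms k(1) by (intro subset_prob_not_bob_wins_from_le) (auto simp: outcomes_def)
  qed (use assms in auto)
  also have "\<dots> \<le> 1 / (8 * real (Suc n)) * 2"
    using k(3,4) by (intro card_mult_square_bound_le) (auto simp: r_def)
  finally show ?thesis
    by (simp add: field_simps)
qed

lemma LIMSEQ_zero_if_le_inverse_Suc:
  fixes f :: "nat \<Rightarrow> real"
  assumes "\<And>n. 0 \<le> f n" "\<And>n. f n \<le> 1 / (c * real (Suc n))"
  shows "f \<longlonglongrightarrow> 0"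
proof (rule tendsto_sandwich[where f = "\<lambda>_. 0" and h = "\<lambda>n. (1 / c) / real (Suc n)"])
  show "(\<lambda>n. (1 / c) / real (Suc n)) \<longlonglongrightarrow> 0"
    using LIMSEQ_Suc[OF lim_const_over_n[of "1 / c"]] by simp
qed (use assms in auto)

theorem proposition4:
  fixes p :: real
  assumes "0 \<le> p" and "p \<le> 1"
  shows "(p < 1/64 \<longrightarrow> (\<lambda>n. P_ab n p) \<longlonglongrightarrow> 0) \<and>
         (p > 15/16 \<longrightarrow> (\<lambda>n. P_ab n p) \<longlonglongrightarrow> 1)"
proof -
  have P_ab_bounds: "0 \<le> P_ab n p" "P_ab n p \<le> 1" for n
    unfolding P_ab_eq_subset_prob using assms
    by (simp_all add: subset_prob_nonneg subset_prob_le_1 finite_outcomes)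
  have "(\<lambda>n. P_ab n p) \<longlonglongrightarrow> 0" if "p < 1/64"
    using assms that P_ab_bounds P_ab_le by (intro LIMSEQ_zero_if_le_inverse_Suc[where c = 8]) auto
  moreover have "(\<lambda>n. P_ab n p) \<longlonglongrightarrow> 1" if "p > 15/16"
  proof -
    have "(\<lambda>n. 1 - P_ab n p) \<longlonglongrightarrow> 0"
      using assms that P_ab_bounds one_minus_P_ab_le by (intro LIMSEQ_zero_if_le_inverse_Suc[where c = 4]) auto
    then show ?thesis
      using tendsto_diff[OF tendsto_const, of "\<lambda>n. 1 - P_ab n p" 0 sequentially 1] by simp
  qed
  ultimately show ?thesis
    by blast
qed

end
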